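(* Let $\Lambda\neq 0$, $\kappa=8\pi G/c^4$, let $F$ be any continuous real function with $F(4\Lambda)=0$, let $c'\in\mathbb{R}$ be arbitrary, and let $$f(R)=\exp\Big(\frac{R}{2\Lambda}\Big)\Big[\int F(R)\exp\Big(-\frac{R}{2\Lambda}\Big)dR+c'\Big].$$ Then every vacuum solution of Einstein's field equations $R_{\mu\nu}-\tfrac12 Rg_{\mu\nu}+\Lambda g_{\mu\nu}=0$ is a vacuum solution of the $f(R)$ field equations $f'(R)R_{\mu\nu}-\tfrac12 f(R)g_{\mu\nu}-\nabla_\mu\nabla_\nu f'(R)+\square f'(R)g_{\mu\nu}=0$.
   Context: Metrics $g_{\mu\nu}$ are on a four-dimensional spacetime; $R_{\mu\nu}$ is the Ricci tensor, $R=g^{\mu\nu}R_{\mu\nu}$ the Ricci scalar, $\nabla$ the Levi-Civita connection and $\square=g^{\mu\nu}\nabla_\mu\nabla_\nu$. $\int F(R)\exp(-R/(2\Lambda))\,dR$ denotes a fixed antiderivative in $R$. A vacuum solution is one with vanishing stress-energy tensor. *)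

theory Defs
  imports "HOL-Analysis.Analysis"
begin

text \<open>Local coordinate description of a 4-dimensional spacetime: a metric is a
  matrix-valued function on (an open chart domain in) real^4. Indices range over
  the numeral type 4.\<close>

type_synonym metric = "real^4 \<Rightarrow> real^4^4"

definition pd :: "4 \<Rightarrow> (real^4 \<Rightarrow> real) \<Rightarrow> real^4 \<Rightarrow> real" where
  "pd i h x = deriv (\<lambda>t. h (x + t *\<^sub>R axis i 1)) 0"

definition ginv :: "metric \<Rightarrow> real^4 \<Rightarrow> real^4^4" where
  "ginv g x = matrix_inv (g x)"

definition christoffel :: "metric \<Rightarrow> 4 \<Rightarrow> 4 \<Rightarrow> 4 \<Rightarrow> real^4 \<Rightarrow> real" where
  "christoffel g k i j x = (1/2) * (\<Sum>l\<in>UNIV. ginv g x $ k $ l *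
      (pd i (\<lambda>y. g y $ j $ l) x + pd j (\<lambda>y. g y $ i $ l) x - pd l (\<lambda>y. g y $ i $ j) x))"

definition ricci :: "metric \<Rightarrow> 4 \<Rightarrow> 4 \<Rightarrow> real^4 \<Rightarrow> real" where
  "ricci g i j x = (\<Sum>k\<in>UNIV. pd k (christoffel g k i j) x - pd j (christoffel g k i k) x
      + (\<Sum>l\<in>UNIV. christoffel g k k l x * christoffel g l i j x
                   - christoffel g k j l x * christoffel g l i k x))"

definition scalar_curv :: "metric \<Rightarrow> real^4 \<Rightarrow> real" where
  "scalar_curv g x = (\<Sum>i\<in>UNIV. \<Sum>j\<in>UNIV. ginv g x $ i $ j * ricci g i j x)"

definition cov_hess :: "metric \<Rightarrow> (real^4 \<Rightarrow> real) \<Rightarrow> 4 \<Rightarrow> 4 \<Rightarrow> real^4 \<Rightarrow> real" where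
  "cov_hess g \<phi> i j x = pd i (pd j \<phi>) x - (\<Sum>k\<in>UNIV. christoffel g k i j x * pd k \<phi> x)"

definition box :: "metric \<Rightarrow> (real^4 \<Rightarrow> real) \<Rightarrow> real^4 \<Rightarrow> real" where
  "box g \<phi> x = (\<Sum>i\<in>UNIV. \<Sum>j\<in>UNIV. ginv g x $ i $ j * cov_hess g \<phi> i j x)"

definition is_metric_on :: "metric \<Rightarrow> (real^4) set \<Rightarrow> bool" where
  "is_metric_on g U \<longleftrightarrow> (\<forall>x\<in>U. transpose (g x) = g x \<and> invertible (g x))"

definition vacuum_einstein :: "real \<Rightarrow> metric \<Rightarrow> (real^4) set \<Rightarrow> bool" where
  "vacuum_einstein \<Lambda> g U \<longleftrightarrow> (\<forall>x\<in>U. \<forall>i j.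
      ricci g i j x - (1/2) * scalar_curv g x * g x $ i $ j + \<Lambda> * g x $ i $ j = 0)"

definition vacuum_fR :: "(real \<Rightarrow> real) \<Rightarrow> metric \<Rightarrow> (real^4) set \<Rightarrow> bool" where
  "vacuum_fR f g U \<longleftrightarrow> (let \<phi> = (\<lambda>y. deriv f (scalar_curv g y)) in
     (\<forall>x\<in>U. \<forall>i j.
      \<phi> x * ricci g i j x - (1/2) * f (scalar_curv g x) * g x $ i $ j
      - cov_hess g \<phi> i j x + box g \<phi> x * g x $ i $ j = 0))"

end

theory Submission
  imports Defs
begin

text \<open>Tracing the Einstein equations with the inverse metric gives R = 4\<Lambda>, so every
  vacuum Einstein metric has constant scalar curvature and R_{ij} = \<Lambda> g_{ij}.
  Then f'(R) is constant, its covariant derivatives vanish, and the f(R) equations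
  reduce to (\<Lambda> f'(4\<Lambda>) - f(4\<Lambda>)/2) g_{ij} = 0. For the given f one has
  f' = f/(2\<Lambda>) + F, so this holds exactly because F(4\<Lambda>) = 0.\<close>

lemma matrix_inv_mult_left:
  fixes A :: "'a::semiring_1^'n^'n"
  assumes "invertible A"
  shows "matrix_inv A ** A = mat 1"
  using assms unfolding invertible_def matrix_inv_def by (rule someI_ex[THEN conjunct2])

lemma sum_matrix_inv_mult_symmetric:
  fixes A :: "'a::comm_semiring_1^'n^'n"
  assumes "transpose A = A" "invertible A"
  shows "(\<Sum>i\<in>UNIV. \<Sum>j\<in>UNIV. matrix_inv A $ i $ j * A $ i $ j) = of_nat CARD('n)"
proof -
  have symm: "A $ j $ i = A $ i $ j" for i j
    using arg_cong[OF assms(1), of "\<lambda>M. M $ i $ j"] by (simp add: transpose_def)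
  have "(\<Sum>j\<in>UNIV. matrix_inv A $ i $ j * A $ i $ j) = (matrix_inv A ** A) $ i $ i" for i
    by (simp add: matrix_matrix_mult_def symm)
  also have "\<dots> i = 1" for i
    by (simp add: matrix_inv_mult_left[OF assms(2)] mat_def)
  finally show ?thesis by simp
qed

lemma pd_const_on_open:
  assumes "open U" "x \<in> U" "\<And>y. y \<in> U \<Longrightarrow> h y = c"
  shows "pd i h x = 0"
proof -
  let ?S = "(\<lambda>t::real. x + t *\<^sub>R axis i 1) -` U"
  have "open ?S"
    by (rule open_vimage[OF assms(1)]) (intro continuous_intros)
  moreover have "0 \<in> ?S" using assms(2) by simp
  ultimately have "((\<lambda>t. h (x + t *\<^sub>R axis i 1)) has_field_derivative 0) (at 0)"
    by (rule has_field_derivative_transform_within_open[OF DERIV_const[of c]])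
      (simp add: assms(3))
  then show ?thesis unfolding pd_def by (rule DERIV_imp_deriv)
qed

lemma cov_hess_const_on_open:
  assumes "open U" "x \<in> U" "\<And>y. y \<in> U \<Longrightarrow> \<phi> y = c"
  shows "cov_hess g \<phi> i j x = 0"
proof -
  have first: "pd k \<phi> y = 0" if "y \<in> U" for k y
    using pd_const_on_open[OF assms(1) that assms(3)] .
  have "pd i (pd j \<phi>) x = 0"
    using pd_const_on_open[OF assms(1,2) first] .
  with first[OF assms(2)] show ?thesis
    unfolding cov_hess_def by simp
qed

lemma box_const_on_open:
  assumes "open U" "x \<in> U" "\<And>y. y \<in> U \<Longrightarrow> \<phi> y = c"
  shows "box g \<phi> x = 0"
  unfolding box_def using cov_hess_const_on_open[OF assms] by simp

lemma vacuum_einstein_scalar_curv: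
  assumes "is_metric_on g U" "vacuum_einstein \<Lambda> g U" "x \<in> U"
  shows "scalar_curv g x = 4 * \<Lambda>"
proof -
  define c where "c = (1/2) * scalar_curv g x - \<Lambda>"
  have ricci_eq: "ricci g i j x = c * g x $ i $ j" for i j
    using assms(2,3) unfolding vacuum_einstein_def c_def
    by (simp add: algebra_simps eq_diff_eq)
  have trace: "(\<Sum>i\<in>UNIV. \<Sum>j\<in>UNIV. ginv g x $ i $ j * g x $ i $ j) = 4"
    using assms(1,3) unfolding is_metric_on_def ginv_def
    by (simp add: sum_matrix_inv_mult_symmetric)
  have "scalar_curv g x = c * (\<Sum>i\<in>UNIV. \<Sum>j\<in>UNIV. ginv g x $ i $ j * g x $ i $ j)"
    unfolding scalar_curv_def ricci_eq by (simp add: sum_distrib_left mult.left_commute)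
  then have "scalar_curv g x = c * 4"
    by (simp only: trace)
  then show ?thesis unfolding c_def by simp
qed

lemma vacuum_einstein_ricci:
  assumes "is_metric_on g U" "vacuum_einstein \<Lambda> g U" "x \<in> U"
  shows "ricci g i j x = \<Lambda> * g x $ i $ j"
  using assms(2,3) vacuum_einstein_scalar_curv[OF assms]
  unfolding vacuum_einstein_def by (auto simp: algebra_simps)

lemma vacuum_einstein_imp_vacuum_fR:
  assumes "open U" "is_metric_on g U" "vacuum_einstein \<Lambda> g U"
    and "deriv f (4 * \<Lambda>) * (4 * \<Lambda>) = 2 * f (4 * \<Lambda>)"
  shows "vacuum_fR f g U"
proof -
  define \<phi> where "\<phi> = (\<lambda>y. deriv f (scalar_curv g y))"
  have \<phi>_const: "\<phi> y = deriv f (4 * \<Lambda>)" if "y \<in> U" for y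
    using vacuum_einstein_scalar_curv[OF assms(2,3) that] by (simp add: \<phi>_def)
  show ?thesis
    unfolding vacuum_fR_def Let_def \<phi>_def[symmetric]
  proof (intro ballI allI)
    fix x i j assume x: "x \<in> U"
    have "\<phi> x * ricci g i j x - 1/2 * f (scalar_curv g x) * g x $ i $ j
        = (deriv f (4 * \<Lambda>) * \<Lambda> - f (4 * \<Lambda>) / 2) * g x $ i $ j"
      by (simp add: \<phi>_const[OF x] vacuum_einstein_ricci[OF assms(2,3) x]
          vacuum_einstein_scalar_curv[OF assms(2,3) x] algebra_simps)
    also have "\<dots> = 0"
      using assms(4) by (simp add: algebra_simps)
    finally show "\<phi> x * ricci g i j x - 1/2 * f (scalar_curv g x) * g x $ i $ j
        - cov_hess g \<phi> i j x + box g \<phi> x * g x $ i $ j = 0"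
      by (simp add: cov_hess_const_on_open[OF assms(1) x \<phi>_const]
          box_const_on_open[OF assms(1) x \<phi>_const])
  qed
qed

lemma exp_integrating_factor_deriv:
  fixes \<Lambda> c0 :: real
  assumes "\<Lambda> \<noteq> 0"
    and "\<And>R. (A has_real_derivative F R * exp (- R / (2 * \<Lambda>))) (at R)"
    and "\<And>R. f R = exp (R / (2 * \<Lambda>)) * (A R + c0)"
  shows "deriv f R = f R / (2 * \<Lambda>) + F R"
proof -
  have "f = (\<lambda>R. exp (R / (2 * \<Lambda>)) * (A R + c0))"
    using assms(3) by auto
  moreover have "((\<lambda>R. exp (R / (2 * \<Lambda>)) * (A R + c0)) has_real_derivative
      exp (R / (2 * \<Lambda>)) * (A R + c0) / (2 * \<Lambda>) + F R) (at R)"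
    using assms(1) by (auto intro!: derivative_eq_intros assms(2)
        simp: field_simps simp flip: exp_add)
  ultimately show ?thesis
    using assms(3) by (simp add: DERIV_imp_deriv)
qed

theorem mainTheorem6:
  fixes \<Lambda> c0 :: real and F A f :: "real \<Rightarrow> real" and g :: metric and U :: "(real^4) set"
  assumes "\<Lambda> \<noteq> 0"
    and "continuous_on UNIV F" and "F (4 * \<Lambda>) = 0"
    and "\<And>R. (A has_real_derivative F R * exp (- R / (2 * \<Lambda>))) (at R)"
    and "\<And>R. f R = exp (R / (2 * \<Lambda>)) * (A R + c0)"
    and "open U" and "is_metric_on g U"
    and "vacuum_einstein \<Lambda> g U"
  shows "vacuum_fR f g U"
proof (rule vacuum_einstein_imp_vacuum_fR[OF assms(6-8)])
  have "deriv f (4 * \<Lambda>) = f (4 * \<Lambda>) / (2 * \<Lambda>)"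
    using exp_integrating_factor_deriv[OF assms(1,4,5)] assms(3) by simp
  with assms(1) show "deriv f (4 * \<Lambda>) * (4 * \<Lambda>) = 2 * f (4 * \<Lambda>)"
    by (simp add: field_simps)
qed

end
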